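(* Let $H\in\mathbb{N}$, $K_p\in\mathbb{R}^{m_p\times n_p}$, $L_p\in\mathbb{R}^{n_p\times q_p}$, $\Psi_p\subseteq\mathbb{R}^{n_p}$, and let $\Omega_p\subseteq\mathbb{R}^{n_p}$ be a set containing the origin such that for all $i\in\{1,\dots,H\}$ $$(A_p^i+B_p^iK_p)\Omega_p\oplus\Big(\bigoplus_{j=0}^{i-1}A_p^jL_p(C_p\Psi_p\oplus\mathbb{V}_p)\Big)\subseteq\Omega_p,$$ where $B_p^i:=\sum_{j=0}^{i-1}A_p^jB_p$. Then with $\mu(\bar\nu_c,\hat x_p,\bar x_p):=\bar\nu_c+K_p(\hat x_p-\bar x_p)$ and $\eta(\hat x_p,\tilde x_p,\bar x_p):=0$ ("ZOH actuator"), the set $\Omega:=\Omega_p\times K_p\Omega_p\times\{0\}$ is $[1,H]$ RCI for the control error $e$.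
   Context: Setting. $A_p\in\mathbb{R}^{n_p\times n_p}$, $B_p\in\mathbb{R}^{n_p\times m_p}$, $C_p\in\mathbb{R}^{q_p\times n_p}$; $\mathbb{X}_p,\mathbb{U}_p$ closed sets containing the origin; $\mathbb{V}_p\subseteq\mathbb{R}^{q_p}$ compact convex containing the origin; integers $g\ge1$, $c\ge g$, $b\ge c$. Overall state $x=(x_p,u_s,\beta)\in\mathbb{R}^{n_p}\times\mathbb{R}^{m_p}\times\mathbb{R}$, input $u=(u_c,\gamma,u_e)\in\mathbb{R}^{m_p}\times\{0,1\}\times\mathbb{R}^{m_p}$, $$f(x,u):=\begin{bmatrix}A_px_p+B_p((1-\gamma)u_s+\gamma u_c+u_e)\\ (1-\gamma)u_s+\gamma u_c\\ \min\{\beta+g-\gamma c,\,b\}\end{bmatrix},$$ $\mathbb{X}:=\mathbb{X}_p\times\mathbb{U}_p\times\{0,\dots,b\}$, and $\Delta:=L_p(C_p\Psi_p\oplus\mathbb{V}_p)\times\{0\}\times\{0\}$. $[1,H]$ RCI sets. Given functions $\mu:\mathbb{R}^{m_p}\times\mathbb{R}^{n_p}\times\mathbb{R}^{n_p}\to\mathbb{R}^{m_p}$ and $\eta:\mathbb{R}^{n_p}\times\mathbb{R}^{n_p}\times\mathbb{R}^{n_p}\to\mathbb{R}^{m_p}$, define for $\bar\nu=(\bar\nu_c,\bar\gamma,\cdot)$ $\phi'(\bar\nu,\hat x,\tilde x,\bar x):=(\mu(\bar\nu_c,\hat x_p,\bar x_p),\,1,\,\eta(\hat x_p,\tilde x_p,\bar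 x_p))$ and $\phi''(\bar\nu,\hat x,\tilde x,\bar x):=(0,\,0,\,\eta(\hat x_p,\tilde x_p,\bar x_p))$. Given initial states $\hat x(0),\tilde x(0),\bar x(0)$, $\bar\nu_c(0)\in\mathbb{U}_p$ and $\delta(0),\dots,\delta(H-1)\in\Delta$, let $\bar\nu(0):=(\bar\nu_c(0),1,0)$, $\bar\nu(i):=(0,0,0)$ for $i\ge1$, and define for $i=0,\dots,H-1$: $\bar x(i+1)=f(\bar x(i),\bar\nu(i))$, $\tilde x(i+1)=f(\tilde x(i),u(i))$, $\hat x(i+1)=f(\hat x(i),u(i))+\delta(i)$, where $u(0)=\phi'(\bar\nu(0),\hat x(0),\tilde x(0),\bar x(0))$ and $u(i)=\phi''(\bar\nu(i),\hat x(i),\tilde x(i),\bar x(i))$ for $i\ge1$. The control error is $e(i):=\hat x(i)-\bar x(i)$. A set $\Omega\subseteq\mathbb{R}^{n_p+m_p+1}$ is called $[1,H]$ RCI for the control error $e$ (with these $\mu,\eta$) if for all $\hat x(0),\tilde x(0),\bar x(0)\in\mathbb{X}$ with $\tilde x(0)=\hat x(0)$ and $e(0)\in\Omega$, all $\bar\nu_c(0)\in\mathbb{U}_p$ and all $(\delta(i))_{i=0}^{H-1}\in\Delta^H$, it holds $e(i)\in\Omega$ for all $i\in\{1,\dots,H\}$. *)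

theory Defs
  imports "HOL-Analysis.Analysis"
begin

primrec mpow :: "real^'n^'n \<Rightarrow> nat \<Rightarrow> real^'n^'n" where
  "mpow A 0 = mat 1"
| "mpow A (Suc i) = A ** mpow A i"

definition msum :: "'a::monoid_add set \<Rightarrow> 'a set \<Rightarrow> 'a set" where
  "msum X Y = {x + y | x y. x \<in> X \<and> y \<in> Y}"

primrec bigmsum :: "(nat \<Rightarrow> 'a::monoid_add set) \<Rightarrow> nat \<Rightarrow> 'a set" where
  "bigmsum S 0 = {0}"
| "bigmsum S (Suc i) = msum (bigmsum S i) (S i)"

definition Bpow :: "real^'n^'n \<Rightarrow> real^'m^'n \<Rightarrow> nat \<Rightarrow> real^'m^'n" where
  "Bpow A B i = (\<Sum>j<i. mpow A j ** B)"

text \<open>Overall state x = (x_p, u_s, beta), input u = (u_c, gamma, u_e).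
  gamma \<in> {0,1} is represented as a real number; only the values 0 and 1 are used.\<close>
type_synonym ('n,'m) st = "(real^'n) \<times> (real^'m) \<times> real"
type_synonym 'm inp = "(real^'m) \<times> real \<times> (real^'m)"

definition fdyn :: "real^'n^'n \<Rightarrow> real^'m^'n \<Rightarrow> nat \<Rightarrow> nat \<Rightarrow> nat
    \<Rightarrow> ('n,'m) st \<Rightarrow> 'm inp \<Rightarrow> ('n,'m) st" where
  "fdyn A B g c b x u = (case x of (xp, us, \<beta>) \<Rightarrow> case u of (uc, \<gamma>, ue) \<Rightarrow>
     (A *v xp + B *v ((1 - \<gamma>) *\<^sub>R us + \<gamma> *\<^sub>R uc + ue),
      (1 - \<gamma>) *\<^sub>R us + \<gamma> *\<^sub>R uc,
      min (\<beta> + real g - \<gamma> * real c) (real b)))"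

definition Xset :: "(real^'n) set \<Rightarrow> (real^'m) set \<Rightarrow> nat \<Rightarrow> ('n,'m) st set" where
  "Xset Xp Up b = Xp \<times> Up \<times> (real ` {0..b})"

definition Dset :: "real^'q^'n \<Rightarrow> real^'n^'q \<Rightarrow> (real^'n) set \<Rightarrow> (real^'q) set
    \<Rightarrow> ('n,'m::finite) st set" where
  "Dset L C Psi V = ((\<lambda>y. L *v y) ` msum ((\<lambda>x. C *v x) ` Psi) V) \<times> {0} \<times> {0}"

definition nubar :: "real^'m \<Rightarrow> nat \<Rightarrow> 'm inp" where
  "nubar nuc0 i = (if i = 0 then (nuc0, 1, 0) else (0, 0, 0))"

definition uctrl :: "(real^'m \<Rightarrow> real^'n \<Rightarrow> real^'n \<Rightarrow> real^'m)
    \<Rightarrow> (real^'n \<Rightarrow> real^'n \<Rightarrow> real^'n \<Rightarrow> real^'m)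
    \<Rightarrow> real^'m \<Rightarrow> nat \<Rightarrow> ('n,'m) st \<Rightarrow> ('n,'m) st \<Rightarrow> ('n,'m) st \<Rightarrow> 'm inp" where
  "uctrl mu eta nuc0 i xh xt xb =
     (if i = 0 then (mu (fst (nubar nuc0 i)) (fst xh) (fst xb), 1, eta (fst xh) (fst xt) (fst xb))
      else (0, 0, eta (fst xh) (fst xt) (fst xb)))"

primrec traj :: "real^'n^'n \<Rightarrow> real^'m^'n \<Rightarrow> nat \<Rightarrow> nat \<Rightarrow> nat
    \<Rightarrow> (real^'m \<Rightarrow> real^'n \<Rightarrow> real^'n \<Rightarrow> real^'m)
    \<Rightarrow> (real^'n \<Rightarrow> real^'n \<Rightarrow> real^'n \<Rightarrow> real^'m)
    \<Rightarrow> ('n,'m) st \<Rightarrow> ('n,'m) st \<Rightarrow> ('n,'m) st \<Rightarrow> real^'m \<Rightarrow> (nat \<Rightarrow> ('n,'m) st)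
    \<Rightarrow> nat \<Rightarrow> ('n,'m) st \<times> ('n,'m) st \<times> ('n,'m) st" where
  "traj A B g c b mu eta xh0 xt0 xb0 nuc0 \<delta> 0 = (xh0, xt0, xb0)"
| "traj A B g c b mu eta xh0 xt0 xb0 nuc0 \<delta> (Suc i) =
     (case traj A B g c b mu eta xh0 xt0 xb0 nuc0 \<delta> i of (xh, xt, xb) \<Rightarrow>
       (let u = uctrl mu eta nuc0 i xh xt xb in
         (fdyn A B g c b xh u + \<delta> i, fdyn A B g c b xt u, fdyn A B g c b xb (nubar nuc0 i))))"

definition cerr where
  "cerr A B g c b mu eta xh0 xt0 xb0 nuc0 \<delta> i =
     (case traj A B g c b mu eta xh0 xt0 xb0 nuc0 \<delta> i of (xh, xt, xb) \<Rightarrow> xh - xb)"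

definition RCI_1H :: "nat \<Rightarrow> ('n,'m) st set
    \<Rightarrow> real^'n^'n \<Rightarrow> real^'m^'n \<Rightarrow> real^'n^'q \<Rightarrow> real^'q^'n
    \<Rightarrow> (real^'n) set \<Rightarrow> (real^'m) set \<Rightarrow> (real^'q) set \<Rightarrow> (real^'n) set
    \<Rightarrow> nat \<Rightarrow> nat \<Rightarrow> nat
    \<Rightarrow> (real^'m \<Rightarrow> real^'n \<Rightarrow> real^'n \<Rightarrow> real^'m)
    \<Rightarrow> (real^'n \<Rightarrow> real^'n \<Rightarrow> real^'n \<Rightarrow> real^'m) \<Rightarrow> bool" where
  "RCI_1H H \<Omega> A B C L Xp Up V Psi g c b mu eta \<longleftrightarrow>
     (\<forall>xh0 xt0 xb0 nuc0 \<delta>.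
        xh0 \<in> Xset Xp Up b \<and> xt0 \<in> Xset Xp Up b \<and> xb0 \<in> Xset Xp Up b \<and> xt0 = xh0 \<and>
        xh0 - xb0 \<in> \<Omega> \<and> nuc0 \<in> Up \<and> (\<forall>i<H. \<delta> i \<in> Dset L C Psi V) \<longrightarrow>
        (\<forall>i\<in>{1..H}. cerr A B g c b mu eta xh0 xt0 xb0 nuc0 \<delta> i \<in> \<Omega>))"

end

theory Submission
  imports Defs
begin

text \<open>Under the ZOH actuator the reference and the actual plant receive the same switching signal,
  so the counter components agree and the held-input error stays at \<open>K e\<^sub>p(0)\<close> after the first
  step. The plant error therefore evolves as \<open>e\<^sub>p(i) = (A\<^sup>i + B\<^sup>i K) e\<^sub>p(0) + \<Sum>\<^sub>j A\<^sup>j d(i-1-j)\<close>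
  with \<open>d(k) \<in> L(C\<Psi> \<oplus> V)\<close>, which lies in \<open>\<Omega>\<^sub>p\<close> by the hypothesis on \<open>\<Omega>\<^sub>p\<close>.\<close>

lemma sum_mem_bigmsum:
  fixes s :: "nat \<Rightarrow> 'a::comm_monoid_add"
  assumes "\<And>k. k < i \<Longrightarrow> s k \<in> S k"
  shows "(\<Sum>k<i. s k) \<in> bigmsum S i"
  using assms by (induction i) (auto simp: msum_def)

lemma Bpow_Suc: "Bpow A B (Suc i) = B + A ** Bpow A B i"
proof (induction i)
  case 0 then show ?case by (simp add: Bpow_def)
next
  case (Suc i)
  have "Bpow A B (Suc (Suc i)) = Bpow A B (Suc i) + A ** (mpow A i ** B)"
    by (simp add: Bpow_def matrix_mul_assoc)
  also have "\<dots> = B + A ** (Bpow A B i + mpow A i ** B)"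
    by (simp only: Suc.IH add.assoc matrix_add_ldistrib)
  also have "Bpow A B i + mpow A i ** B = Bpow A B (Suc i)"
    by (simp add: Bpow_def)
  finally show ?case .
qed

lemma zoh_transition_Suc:
  fixes A :: "real^'n^'n" and B :: "real^'m^'n" and K :: "real^'n^'m"
  shows "(mpow A (Suc i) + Bpow A B (Suc i) ** K) *v x
           = A *v ((mpow A i + Bpow A B i ** K) *v x) + B *v (K *v x)"
  by (simp add: Bpow_Suc matrix_vector_mult_add_rdistrib matrix_vector_right_distrib
      matrix_vector_mul_assoc[symmetric])

lemma convolution_Suc:
  fixes A :: "real^'n^'n"
  shows "(\<Sum>k<Suc i. mpow A k *v d (i - k)) = d i + A *v (\<Sum>k<i. mpow A k *v d (i - 1 - k))"
  unfolding sum.lessThan_Suc_shift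
  by (simp del: sum.lessThan_Suc add: vec.sum matrix_vector_mul_assoc)

lemma zoh_error_step:
  fixes A :: "real^'n^'n" and B :: "real^'m^'n" and K :: "real^'n^'m"
  assumes err: "cerr A B g c b (\<lambda>nuc xh xb. nuc + K *v (xh - xb)) (\<lambda>xh xt xb. 0)
                  xh0 xt0 xb0 nuc0 \<delta> i = (ep, eu, 0)"
    and dist: "\<delta> i = (d, 0, 0)"
  shows "cerr A B g c b (\<lambda>nuc xh xb. nuc + K *v (xh - xb)) (\<lambda>xh xt xb. 0)
           xh0 xt0 xb0 nuc0 \<delta> (Suc i)
         = (let eu' = if i = 0 then K *v ep else eu in (A *v ep + B *v eu' + d, eu', 0))"
proof -
  obtain ph uh bh xt pb ub bb
    where tr: "traj A B g c b (\<lambda>nuc xh xb. nuc + K *v (xh - xb)) (\<lambda>xh xt xb. 0)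
                 xh0 xt0 xb0 nuc0 \<delta> i = ((ph, uh, bh), xt, (pb, ub, bb))"
    by (metis prod_cases3)
  with err have "ph = ep + pb" "uh = eu + ub" "bh = bb"
    by (auto simp: cerr_def)
  with tr dist show ?thesis
    by (simp add: cerr_def fdyn_def uctrl_def nubar_def Let_def algebra_simps)
qed

lemma zoh_error_closed_form:
  fixes A :: "real^'n^'n" and B :: "real^'m^'n" and K :: "real^'n^'m"
  assumes err0: "xh0 - xb0 = (ep, eu, 0)"
    and dist: "\<And>k. k < H \<Longrightarrow> \<delta> k = (d k, 0, 0)"
    and "i < H"
  shows "cerr A B g c b (\<lambda>nuc xh xb. nuc + K *v (xh - xb)) (\<lambda>xh xt xb. 0)
           xh0 xt0 xb0 nuc0 \<delta> (Suc i)
         = ((mpow A (Suc i) + Bpow A B (Suc i) ** K) *v ep + (\<Sum>k<Suc i. mpow A k *v d (i - k)),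
            K *v ep, 0)"
  using \<open>i < H\<close>
proof (induction i)
  case 0
  have "cerr A B g c b (\<lambda>nuc xh xb. nuc + K *v (xh - xb)) (\<lambda>xh xt xb. 0)
          xh0 xt0 xb0 nuc0 \<delta> 0 = (ep, eu, 0)"
    using err0 by (simp add: cerr_def)
  from zoh_error_step[OF this dist] 0 show ?case
    by (simp add: Bpow_def matrix_vector_mult_add_rdistrib matrix_vector_mul_assoc)
next
  case (Suc i)
  from zoh_error_step[OF Suc.IH dist] Suc.prems show ?case
    unfolding convolution_Suc[of A d "Suc i"] zoh_transition_Suc[of A "Suc i"]
    by (simp add: Let_def algebra_simps)
qed

theorem lemma2:
  fixes A :: "real^'n^'n" and B :: "real^'m^'n" and C :: "real^'n^'q"
    and K :: "real^'n^'m" and L :: "real^'q^'n"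
    and Xp :: "(real^'n) set" and Up :: "(real^'m) set" and V :: "(real^'q) set"
    and Psi :: "(real^'n) set" and Omp :: "(real^'n) set"
    and g c b H :: nat
  assumes "closed Xp" and "0 \<in> Xp" and "closed Up" and "0 \<in> Up"
    and "compact V" and "convex V" and "0 \<in> V"
    and "g \<ge> 1" and "c \<ge> g" and "b \<ge> c"
    and "0 \<in> Omp"
    and "\<forall>i\<in>{1..H}.
           msum ((\<lambda>x. (mpow A i + Bpow A B i ** K) *v x) ` Omp)
                (bigmsum (\<lambda>j. (\<lambda>y. (mpow A j ** L) *v y) ` msum ((\<lambda>x. C *v x) ` Psi) V) i)
           \<subseteq> Omp"
  shows "RCI_1H H (Omp \<times> ((\<lambda>x. K *v x) ` Omp) \<times> {0}) A B C L Xp Up V Psi g c b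
           (\<lambda>nuc xh xb. nuc + K *v (xh - xb)) (\<lambda>xh xt xb. 0)"
  unfolding RCI_1H_def
proof (intro allI impI ballI)
  fix xh0 xt0 xb0 :: "('n, 'm) st" and nuc0 and \<delta> :: "nat \<Rightarrow> ('n, 'm) st" and i :: nat
  let ?S = "msum ((\<lambda>x. C *v x) ` Psi) V"
  assume hyps: "xh0 \<in> Xset Xp Up b \<and> xt0 \<in> Xset Xp Up b \<and> xb0 \<in> Xset Xp Up b \<and> xt0 = xh0 \<and>
      xh0 - xb0 \<in> Omp \<times> (\<lambda>x. K *v x) ` Omp \<times> {0} \<and> nuc0 \<in> Up \<and> (\<forall>k<H. \<delta> k \<in> Dset L C Psi V)"
    and "i \<in> {1..H}"
  then obtain k where i: "i = Suc k" "k < H"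
    by (cases i) auto
  obtain ep eu where err0: "xh0 - xb0 = (ep, eu, 0)" and ep: "ep \<in> Omp"
    using hyps by auto
  have "\<forall>j<H. \<exists>y. y \<in> ?S \<and> \<delta> j = (L *v y, 0, 0)"
    using hyps by (force simp: Dset_def)
  then obtain y where y: "\<And>j. j < H \<Longrightarrow> y j \<in> ?S \<and> \<delta> j = (L *v y j, 0, 0)"
    by metis
  have "(\<Sum>j<i. mpow A j *v (L *v y (k - j)))
          \<in> bigmsum (\<lambda>j. (\<lambda>y. (mpow A j ** L) *v y) ` ?S) i"
    using y i by (intro sum_mem_bigmsum) (auto simp: matrix_vector_mul_assoc)
  with assms(12) \<open>i \<in> {1..H}\<close> ep
  have "(mpow A i + Bpow A B i ** K) *v ep + (\<Sum>j<i. mpow A j *v (L *v y (k - j))) \<in> Omp"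
    unfolding msum_def by blast
  with zoh_error_closed_form[OF err0, of H \<delta> "\<lambda>j. L *v y j" k] y i ep
  show "cerr A B g c b (\<lambda>nuc xh xb. nuc + K *v (xh - xb)) (\<lambda>xh xt xb. 0) xh0 xt0 xb0 nuc0 \<delta> i
          \<in> Omp \<times> (\<lambda>x. K *v x) ` Omp \<times> {0}"
    by auto
qed

end
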